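(* Let $G$ be a snark and let $e_1$ and $e_2$ be distinct edges of $G$. Let $G(e_1,e_2)$ be the cubic graph obtained from $G$ by subdividing $e_1$ with a new vertex $w_1$, subdividing $e_2$ with a new vertex $w_2$, and adding a new edge $w_1w_2$. Then $G(e_1,e_2)$ is a snark if and only if the graph $G-\{e_1,e_2\}$ (obtained from $G$ by deleting the two edges and keeping all vertices) is not $3$-edge-colourable.
   Context: A snark is a connected cubic graph (loops and parallel edges allowed) which has no proper $3$-edge-colouring. A $3$-edge-colouring of a graph (possibly with vertices of degree less than $3$) is proper if edges sharing an end-vertex receive distinct colours. *)

theory Defs
  imports "Graph_Theory.Digraph" "Graph_Theory.Digraph_Component"
begin

text \<open>An undirected multigraph (loops and parallel edges allowed) is represented by a
  pre_digraph whose arc orientation is ignored: each arc e joins tail G e and head G e.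
  A loop contributes 2 to the degree of its vertex.\<close>

definition degree :: "('v,'e) pre_digraph \<Rightarrow> 'v \<Rightarrow> nat" where
  "degree G v = in_degree G v + out_degree G v"

definition cubic :: "('v,'e) pre_digraph \<Rightarrow> bool" where
  "cubic G \<longleftrightarrow> fin_digraph G \<and> (\<forall>v \<in> verts G. degree G v = 3)"

text \<open>Proper 3-edge-colouring with colours 0,1,2: at every vertex, every colour occurs on
  at most one edge-end (so edges sharing an end-vertex get distinct colours; a loop, which
  meets its vertex twice, can never be properly coloured).\<close>

definition proper_3_edge_colouring :: "('v,'e) pre_digraph \<Rightarrow> ('e \<Rightarrow> nat) \<Rightarrow> bool" where
  "proper_3_edge_colouring G c \<longleftrightarrow>
     (\<forall>e \<in> arcs G. c e \<in> {0,1,2}) \<and>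
     (\<forall>v \<in> verts G. \<forall>k.
        card {e \<in> arcs G. tail G e = v \<and> c e = k} + card {e \<in> arcs G. head G e = v \<and> c e = k} \<le> 1)"

definition three_edge_colourable :: "('v,'e) pre_digraph \<Rightarrow> bool" where
  "three_edge_colourable G \<longleftrightarrow> (\<exists>c. proper_3_edge_colouring G c)"

definition snark :: "('v,'e) pre_digraph \<Rightarrow> bool" where
  "snark G \<longleftrightarrow> cubic G \<and> connected G \<and> \<not> three_edge_colourable G"

definition delete_edges :: "('v,'e) pre_digraph \<Rightarrow> 'e set \<Rightarrow> ('v,'e) pre_digraph" where
  "delete_edges G F = G\<lparr>arcs := arcs G - F\<rparr>"

text \<open>G(e1,e2): subdivide e1 by w1 = Inr False, subdivide e2 by w2 = Inr True, add edge w1w2.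
  Old vertices are Inl v, old edges (other than e1, e2) are Inl e; the new edges are
  Inr 0 = (tail e1) w1, Inr 1 = w1 (head e1), Inr 2 = (tail e2) w2, Inr 3 = w2 (head e2),
  Inr 4 = w1 w2.\<close>

fun G12_tail :: "('v,'e) pre_digraph \<Rightarrow> 'e \<Rightarrow> 'e \<Rightarrow> 'e + nat \<Rightarrow> 'v + bool" where
  "G12_tail G e1 e2 (Inl e) = Inl (tail G e)"
| "G12_tail G e1 e2 (Inr n) =
     (if n = 0 then Inl (tail G e1) else if n = 1 then Inr False
      else if n = 2 then Inl (tail G e2) else if n = 3 then Inr True else Inr False)"

fun G12_head :: "('v,'e) pre_digraph \<Rightarrow> 'e \<Rightarrow> 'e \<Rightarrow> 'e + nat \<Rightarrow> 'v + bool" where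
  "G12_head G e1 e2 (Inl e) = Inl (head G e)"
| "G12_head G e1 e2 (Inr n) =
     (if n = 0 then Inr False else if n = 1 then Inl (head G e1)
      else if n = 2 then Inr True else if n = 3 then Inl (head G e2) else Inr True)"

definition G12 :: "('v,'e) pre_digraph \<Rightarrow> 'e \<Rightarrow> 'e \<Rightarrow> ('v + bool, 'e + nat) pre_digraph" where
  "G12 G e1 e2 = \<lparr> verts = Inl ` verts G \<union> {Inr False, Inr True},
                  arcs = Inl ` (arcs G - {e1, e2}) \<union> Inr ` {0..4},
                  tail = G12_tail G e1 e2,
                  head = G12_head G e1 e2 \<rparr>"

end

theory Submission
  imports Defs
begin

(* Given a proper colouring of H = G - {e1,e2}, every vertex of G misses exactly as many colours
   as it has ends of e1, e2. Give each of these four ends (ports) a colour missing at its vertex,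
   distinct ports at the same vertex receiving distinct colours. Since every colour class of H is
   a matching, the number of vertices missing a colour has the parity of |V G|, so each colour
   occurs an even number of times among the ports. Hence either both ends of e1 and both ends of
   e2 agree, which colours G itself (impossible for a snark), or the ends of e1 carry two distinct
   colours that also appear on the ends of e2, and the third colour goes onto w1w2, colouring
   G(e1,e2). Conversely, any colouring of G(e1,e2) restricts to H. *)

section \<open>Colour degrees and the parity lemma\<close>

definition ends_at :: "('v,'e) pre_digraph \<Rightarrow> 'v \<Rightarrow> 'e \<Rightarrow> nat" where
  "ends_at G v e = of_bool (tail G e = v) + of_bool (head G e = v)"

definition colour_degree :: "('v,'e) pre_digraph \<Rightarrow> ('e \<Rightarrow> nat) \<Rightarrow> 'v \<Rightarrow> nat \<Rightarrow> nat" where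
  "colour_degree G c v k = (\<Sum>e\<in>arcs G. if c e = k then ends_at G v e else 0)"

definition missing_colours :: "('v,'e) pre_digraph \<Rightarrow> ('e \<Rightarrow> nat) \<Rightarrow> 'v \<Rightarrow> nat set" where
  "missing_colours G c v = {k \<in> {0,1,2}. colour_degree G c v k = 0}"

lemma card_tail_head_eq_colour_degree:
  assumes "finite (arcs G)"
  shows "card {e \<in> arcs G. tail G e = v \<and> c e = k} + card {e \<in> arcs G. head G e = v \<and> c e = k}
    = colour_degree G c v k"
proof -
  have "colour_degree G c v k = (\<Sum>e\<in>arcs G. of_bool (tail G e = v \<and> c e = k))
      + (\<Sum>e\<in>arcs G. of_bool (head G e = v \<and> c e = k))"
    unfolding colour_degree_def ends_at_def sum.distrib[symmetric] by (intro sum.cong) auto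
  with assms show ?thesis by (simp add: Int_def conj_commute)
qed

lemma degree_eq_colour_degree_const:
  assumes "finite (arcs G)"
  shows "degree G v = colour_degree G (\<lambda>_. k) v k"
  using card_tail_head_eq_colour_degree[OF assms, of v "\<lambda>_. k" k]
  by (simp add: degree_def in_degree_def out_degree_def in_arcs_def out_arcs_def add.commute)

lemma proper_3_edge_colouring_iff:
  assumes "finite (arcs G)"
  shows "proper_3_edge_colouring G c \<longleftrightarrow>
    (\<forall>e \<in> arcs G. c e \<in> {0,1,2}) \<and> (\<forall>v \<in> verts G. \<forall>k. colour_degree G c v k \<le> 1)"
  unfolding proper_3_edge_colouring_def card_tail_head_eq_colour_degree[OF assms] ..

lemma colour_degree_cong:
  "(\<And>e. e \<in> arcs G \<Longrightarrow> c e = d e) \<Longrightarrow> colour_degree G c v k = colour_degree G d v k"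
  unfolding colour_degree_def by (rule sum.cong) auto

lemma degree_eq_sum_colour_degree:
  assumes "finite (arcs G)" and "\<forall>e \<in> arcs G. c e \<in> {0,1,2}"
  shows "degree G v = colour_degree G c v 0 + colour_degree G c v 1 + colour_degree G c v 2"
  unfolding degree_eq_colour_degree_const[OF assms(1), of v 0] colour_degree_def
    sum.distrib[symmetric]
  using assms(2) by (intro sum.cong) auto

lemma missing_colour_add_colour_degree:
  assumes "finite (arcs G)" and "proper_3_edge_colouring G c" and "v \<in> verts G"
  shows "of_bool (k \<in> missing_colours G c v) + colour_degree G c v k \<le> 1"
    and "k \<in> {0,1,2} \<Longrightarrow> of_bool (k \<in> missing_colours G c v) + colour_degree G c v k = 1"
proof -
  have "colour_degree G c v k \<le> 1"
    using assms by (simp add: proper_3_edge_colouring_iff)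
  then show "of_bool (k \<in> missing_colours G c v) + colour_degree G c v k \<le> 1"
    and "k \<in> {0,1,2} \<Longrightarrow> of_bool (k \<in> missing_colours G c v) + colour_degree G c v k = 1"
    by (auto simp: missing_colours_def le_Suc_eq)
qed

lemma card_missing_colours:
  assumes "finite (arcs G)" and "proper_3_edge_colouring G c" and "v \<in> verts G"
  shows "card (missing_colours G c v) + degree G v = 3"
proof -
  have "card (missing_colours G c v) = (\<Sum>k\<in>{0,1,2}. of_bool (k \<in> missing_colours G c v))"
    by (simp add: missing_colours_def Int_def)
  also have "\<dots> = of_bool (0 \<in> missing_colours G c v) + of_bool (1 \<in> missing_colours G c v)
      + of_bool (2 \<in> missing_colours G c v)"
    by (simp del: sum_of_bool_eq)
  finally show ?thesis
    using missing_colour_add_colour_degree(2)[OF assms, of 0] missing_colour_add_colour_degree(2)[OF assms, of 1]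
      missing_colour_add_colour_degree(2)[OF assms, of 2]
      degree_eq_sum_colour_degree[OF assms(1), of c v] assms(2)
    by (simp add: proper_3_edge_colouring_iff[OF assms(1)])
qed

lemma sum_ends_at:
  assumes "wf_digraph G" "finite (verts G)" "e \<in> arcs G"
  shows "(\<Sum>v\<in>verts G. ends_at G v e) = 2"
  using assms by (simp add: ends_at_def sum.distrib wf_digraph_def)

(* Every vertex either misses k or is covered by exactly one edge of colour k. *)
lemma parity_lemma:
  assumes "fin_digraph G" and "proper_3_edge_colouring G c" and "k \<in> {0,1,2}"
  shows "card {v \<in> verts G. k \<in> missing_colours G c v} + 2 * card {e \<in> arcs G. c e = k}
    = card (verts G)"
proof -
  have fin: "finite (verts G)" "finite (arcs G)" and wf: "wf_digraph G"
    using assms(1) by (auto simp: fin_digraph_def fin_digraph_axioms_def)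
  have "(\<Sum>v\<in>verts G. colour_degree G c v k)
      = (\<Sum>e\<in>arcs G. \<Sum>v\<in>verts G. if c e = k then ends_at G v e else 0)"
    unfolding colour_degree_def by (rule sum.swap)
  also have "\<dots> = (\<Sum>e\<in>arcs G. if c e = k then 2 else 0)"
    using sum_ends_at[OF wf fin(1)] by (intro sum.cong) auto
  also have "\<dots> = 2 * card {e \<in> arcs G. c e = k}"
    using fin(2) by (simp add: sum.If_cases Int_def)
  finally have "2 * card {e \<in> arcs G. c e = k} = (\<Sum>v\<in>verts G. colour_degree G c v k)" ..
  moreover have "card {v \<in> verts G. k \<in> missing_colours G c v}
      = (\<Sum>v\<in>verts G. of_bool (k \<in> missing_colours G c v))"
    using fin(1) by (simp add: Int_def)
  ultimately have "card {v \<in> verts G. k \<in> missing_colours G c v} + 2 * card {e \<in> arcs G. c e = k}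
      = (\<Sum>v\<in>verts G. of_bool (k \<in> missing_colours G c v) + colour_degree G c v k)"
    by (simp add: sum.distrib del: sum_of_bool_eq)
  also have "\<dots> = (\<Sum>v\<in>verts G. 1)"
    using missing_colour_add_colour_degree(2)[OF fin(2) assms(2) _ assms(3)] by (intro sum.cong) auto
  finally show ?thesis by simp
qed

lemma obtain_fibrewise_bijection:
  assumes "finite S" and "p ` S \<subseteq> V" and "\<And>v. v \<in> V \<Longrightarrow> finite (M v)"
    and "\<And>v. v \<in> V \<Longrightarrow> card {s \<in> S. p s = v} = card (M v)"
  obtains f where "\<And>s. s \<in> S \<Longrightarrow> f s \<in> M (p s)"
    and "\<And>v k. v \<in> V \<Longrightarrow> card {s \<in> S. p s = v \<and> f s = k} = of_bool (k \<in> M v)"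
proof -
  have "\<exists>\<beta>. bij_betw \<beta> {s \<in> S. p s = v} (M v)" if "v \<in> V" for v
    using assms that by (intro finite_same_card_bij) auto
  then obtain \<beta> where \<beta>: "\<And>v. v \<in> V \<Longrightarrow> bij_betw (\<beta> v) {s \<in> S. p s = v} (M v)"
    by metis
  define f where "f s = \<beta> (p s) s" for s
  have "f s \<in> M (p s)" if "s \<in> S" for s
    using \<beta>[of "p s"] assms(2) that by (auto simp: f_def bij_betw_def)
  moreover have "card {s \<in> S. p s = v \<and> f s = k} = of_bool (k \<in> M v)" if v: "v \<in> V" for v k
  proof -
    have fibre: "bij_betw (\<beta> v) {s \<in> S. p s = v} (M v)"
      using v by (rule \<beta>)
    then have "bij_betw (\<beta> v) {s \<in> S. p s = v \<and> f s = k} ({k} \<inter> M v)"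
    proof (rule bij_betw_subset)
      have "M v = \<beta> v ` {s \<in> S. p s = v}"
        using fibre by (simp add: bij_betw_def)
      then show "\<beta> v ` {s \<in> S. p s = v \<and> f s = k} = {k} \<inter> M v"
        by (auto simp: f_def)
    qed auto
    then show ?thesis by (simp add: bij_betw_same_card)
  qed
  ultimately show ?thesis by (rule that)
qed

lemma card_fibrewise_count:
  assumes "finite S" and "finite V" and "p ` S \<subseteq> V"
    and "\<And>v. v \<in> V \<Longrightarrow> card {s \<in> S. p s = v \<and> f s = k} = of_bool (k \<in> M v)"
  shows "card {s \<in> S. f s = k} = card {v \<in> V. k \<in> M v}"
proof -
  have "p ` {s \<in> S. f s = k} \<subseteq> V"
    using assms(3) by auto
  from sum.group[OF _ assms(2) this, of "\<lambda>_. 1::nat"] assms(1)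
  have "card {s \<in> S. f s = k} = (\<Sum>v\<in>V. card {s \<in> S. p s = v \<and> f s = k})"
    by (simp add: conj_ac)
  also have "\<dots> = card {v \<in> V. k \<in> M v}"
    using assms(2,4) by (simp add: Int_def)
  finally show ?thesis .
qed

lemma card_less_4:
  "card {s::nat. s < 4 \<and> P s} = of_bool (P 0) + of_bool (P 1) + of_bool (P 2) + of_bool (P 3)"
proof -
  have "card {s::nat. s < 4 \<and> P s} = (\<Sum>s<4. of_bool (P s))"
    by (simp add: Int_def lessThan_def conj_commute)
  then show ?thesis by (simp add: numeral_eq_Suc)
qed
lemma four_colours_pair_up:
  fixes col :: "nat \<Rightarrow> nat"
  assumes "\<And>s. s < 4 \<Longrightarrow> col s \<in> {0,1,2}"
    and "even (card {s. s < 4 \<and> col s = 0} + card {s. s < 4 \<and> col s = 1})"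
    and "even (card {s. s < 4 \<and> col s = 1} + card {s. s < 4 \<and> col s = 2})"
  shows "col 0 = col 1 \<and> col 2 = col 3 \<or> col 0 \<noteq> col 1 \<and> {col 0, col 1} = {col 2, col 3}"
proof -
  have "col 0 \<in> {0,1,2}" "col 1 \<in> {0,1,2}" "col 2 \<in> {0,1,2}" "col 3 \<in> {0,1,2}"
    using assms(1) by simp_all
  then show ?thesis
    using assms(2,3) unfolding card_less_4 insert_iff empty_iff simp_thms
    by (elim disjE) (simp_all add: insert_commute)
qed

section \<open>Connectivity\<close>

lemma (in wf_digraph) arc_reachable_mk_symmetric:
  assumes "x \<in> arcs G"
  shows "tail G x \<rightarrow>\<^sup>*\<^bsub>mk_symmetric G\<^esub> head G x" and "head G x \<rightarrow>\<^sup>*\<^bsub>mk_symmetric G\<^esub> tail G x"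
proof -
  interpret S: pair_wf_digraph "mk_symmetric G" ..
  show "tail G x \<rightarrow>\<^sup>*\<^bsub>mk_symmetric G\<^esub> head G x" "head G x \<rightarrow>\<^sup>*\<^bsub>mk_symmetric G\<^esub> tail G x"
    using assms by (auto simp: parcs_mk_symmetric intro!: S.reachable_adjI)
qed

lemma connected_if_reachable_from_image:
  assumes "wf_digraph H" and "connected G" and "f ` verts G \<subseteq> verts H"
    and "\<And>e. e \<in> arcs G \<Longrightarrow> f (tail G e) \<rightarrow>\<^sup>*\<^bsub>mk_symmetric H\<^esub> f (head G e)"
    and "\<And>x. x \<in> verts H \<Longrightarrow> \<exists>u \<in> verts G. x \<rightarrow>\<^sup>*\<^bsub>mk_symmetric H\<^esub> f u"
  shows "connected H"
proof -
  interpret S: pair_wf_digraph "mk_symmetric H"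
    using assms(1) by (rule wf_digraph.wellformed_mk_symmetric)
  have reachable_sym: "y \<rightarrow>\<^sup>*\<^bsub>mk_symmetric H\<^esub> x" if "x \<rightarrow>\<^sup>*\<^bsub>mk_symmetric H\<^esub> y" for x y
    using symmetric_mk_symmetric that by (rule symmetric_reachable)
  have lift: "f u \<rightarrow>\<^sup>*\<^bsub>mk_symmetric H\<^esub> f v" if "u \<rightarrow>\<^sup>*\<^bsub>mk_symmetric G\<^esub> v" for u v
    using that unfolding reachable_def[of "mk_symmetric G"]
  proof (induction rule: rtrancl_on_induct)
    case base
    then show ?case using assms(3) by auto
  next
    case (step y z)
    then have "f y \<rightarrow>\<^sup>*\<^bsub>mk_symmetric H\<^esub> f z"
      using assms(4) reachable_sym by (auto simp: parcs_mk_symmetric)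
    with step.IH show ?case by (rule S.reachable_trans)
  qed
  have G: "verts G \<noteq> {}" "\<And>u v. u \<in> verts G \<Longrightarrow> v \<in> verts G \<Longrightarrow> u \<rightarrow>\<^sup>*\<^bsub>mk_symmetric G\<^esub> v"
    using assms(2) by (auto simp: connected_def strongly_connected_def)
  show ?thesis
    unfolding connected_def strongly_connected_def
  proof (intro conjI ballI)
    show "verts (mk_symmetric H) \<noteq> {}"
      using G(1) assms(3) by auto
  next
    fix x y assume "x \<in> verts (mk_symmetric H)" "y \<in> verts (mk_symmetric H)"
    then obtain u v where "u \<in> verts G" "x \<rightarrow>\<^sup>*\<^bsub>mk_symmetric H\<^esub> f u"
      and "v \<in> verts G" "y \<rightarrow>\<^sup>*\<^bsub>mk_symmetric H\<^esub> f v"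
      using assms(5) by (metis pverts_mk_symmetric with_proj_simps(1))
    then show "x \<rightarrow>\<^sup>*\<^bsub>mk_symmetric H\<^esub> y"
      using S.reachable_trans[OF S.reachable_trans[OF _ lift[OF G(2)]] reachable_sym] by blast
  qed
qed

section \<open>The graphs G - {e1, e2} and G(e1, e2)\<close>

lemma delete_edges_simps [simp]:
  "verts (delete_edges G F) = verts G" "arcs (delete_edges G F) = arcs G - F"
  "tail (delete_edges G F) = tail G" "head (delete_edges G F) = head G"
  by (simp_all add: delete_edges_def)

lemma fin_digraph_delete_edges: "fin_digraph G \<Longrightarrow> fin_digraph (delete_edges G F)"
  by (auto simp: fin_digraph_def fin_digraph_axioms_def wf_digraph_def)

lemma colour_degree_delete_edges:
  assumes "finite (arcs G)" and "F \<subseteq> arcs G"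
  shows "colour_degree G c v k
    = colour_degree (delete_edges G F) c v k + (\<Sum>e\<in>F. if c e = k then ends_at G v e else 0)"
  using assms by (simp add: colour_degree_def ends_at_def sum.subset_diff cong: if_cong)

lemma G12_simps [simp]:
  "verts (G12 G e1 e2) = Inl ` verts G \<union> {Inr False, Inr True}"
  "tail (G12 G e1 e2) = G12_tail G e1 e2"
  "head (G12 G e1 e2) = G12_head G e1 e2"
  by (simp_all add: G12_def)

lemma arcs_G12: "arcs (G12 G e1 e2) = Inl ` (arcs G - {e1, e2}) \<union> Inr ` {0..4}"
  by (simp add: G12_def)

lemma sum_arcs_G12:
  assumes "finite (arcs G)"
  shows "(\<Sum>x\<in>arcs (G12 G e1 e2). f x) = (\<Sum>e\<in>arcs G - {e1,e2}. f (Inl e))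
    + f (Inr 0) + f (Inr 1) + f (Inr 2) + f (Inr 3) + f (Inr 4)"
proof -
  have "(\<Sum>x\<in>arcs (G12 G e1 e2). f x) = (\<Sum>e\<in>arcs G - {e1,e2}. f (Inl e)) + (\<Sum>s\<in>{0..4}. f (Inr s))"
    unfolding arcs_G12 using assms by (subst sum.union_disjoint) (auto simp: sum.reindex)
  also have "{0..4::nat} = {0,1,2,3,4}" by auto
  finally show ?thesis by (simp add: add.assoc)
qed

(* port G e1 e2 s, for s < 4, is the end in G of the new edge Inr s of G12 G e1 e2. *)
definition port :: "('v,'e) pre_digraph \<Rightarrow> 'e \<Rightarrow> 'e \<Rightarrow> nat \<Rightarrow> 'v" where
  "port G e1 e2 s =
     (if s = 0 then tail G e1 else if s = 1 then head G e1 else if s = 2 then tail G e2 else head G e2)"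

lemma colour_degree_G12_old_vertex:
  assumes "finite (arcs G)"
  shows "colour_degree (G12 G e1 e2) d (Inl v) k = colour_degree (delete_edges G {e1,e2}) (d \<circ> Inl) v k
    + card {s. s < 4 \<and> port G e1 e2 s = v \<and> d (Inr s) = k}"
  using assms
  by (simp add: colour_degree_def sum_arcs_G12 card_less_4 ends_at_def port_def add.assoc
      cong: if_cong)

lemma colour_degree_G12_new_vertices:
  assumes "finite (arcs G)"
  shows "colour_degree (G12 G e1 e2) d (Inr False) k
      = of_bool (d (Inr 0) = k) + of_bool (d (Inr 1) = k) + of_bool (d (Inr 4) = k)"
    and "colour_degree (G12 G e1 e2) d (Inr True) k
      = of_bool (d (Inr 2) = k) + of_bool (d (Inr 3) = k) + of_bool (d (Inr 4) = k)"
  using assms by (simp_all add: colour_degree_def sum_arcs_G12 ends_at_def)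

lemma degree_G12:
  assumes "finite (arcs G)" and "e1 \<in> arcs G" and "e2 \<in> arcs G" and "e1 \<noteq> e2"
  shows "degree (G12 G e1 e2) (Inl v) = degree G v" and "degree (G12 G e1 e2) (Inr b) = 3"
proof -
  have fin: "finite (arcs (G12 G e1 e2))"
    using assms(1) by (simp add: arcs_G12)
  show "degree (G12 G e1 e2) (Inl v) = degree G v"
    using assms
    by (simp add: degree_eq_colour_degree_const[of _ _ 0] fin colour_degree_G12_old_vertex
        colour_degree_delete_edges[of G "{e1,e2}"] card_less_4 ends_at_def port_def o_def)
  show "degree (G12 G e1 e2) (Inr b) = 3"
    using assms by (cases b) (simp_all add: degree_eq_colour_degree_const[of _ _ 0] fin
        colour_degree_G12_new_vertices)
qed

lemma wf_digraph_G12: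
  assumes "wf_digraph G" and "e1 \<in> arcs G" and "e2 \<in> arcs G"
  shows "wf_digraph (G12 G e1 e2)"
proof -
  have "{0..4::nat} = {0,1,2,3,4}" by auto
  then show ?thesis
    using assms by (auto simp: wf_digraph_def arcs_G12)
qed

lemma fin_digraph_G12:
  assumes "fin_digraph G" and "e1 \<in> arcs G" and "e2 \<in> arcs G"
  shows "fin_digraph (G12 G e1 e2)"
  using assms wf_digraph_G12[of G e1 e2]
  by (simp add: fin_digraph_def fin_digraph_axioms_def arcs_G12)

lemma cubic_G12:
  assumes "cubic G" and "e1 \<in> arcs G" and "e2 \<in> arcs G" and "e1 \<noteq> e2"
  shows "cubic (G12 G e1 e2)"
proof -
  have "finite (arcs G)"
    using assms(1) by (simp add: cubic_def fin_digraph_def fin_digraph_axioms_def)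
  then show ?thesis
    using assms fin_digraph_G12 by (auto simp: cubic_def degree_G12)
qed

lemma reachable_subdivision_vertices_G12:
  assumes "wf_digraph (G12 G e1 e2)" and "e1 \<in> arcs G" and "e2 \<in> arcs G"
  shows "Inl (tail G e1) \<rightarrow>\<^sup>*\<^bsub>mk_symmetric (G12 G e1 e2)\<^esub> Inr False"
    and "Inr False \<rightarrow>\<^sup>*\<^bsub>mk_symmetric (G12 G e1 e2)\<^esub> Inl (tail G e1)"
    and "Inr False \<rightarrow>\<^sup>*\<^bsub>mk_symmetric (G12 G e1 e2)\<^esub> Inl (head G e1)"
    and "Inl (tail G e2) \<rightarrow>\<^sup>*\<^bsub>mk_symmetric (G12 G e1 e2)\<^esub> Inr True"
    and "Inr True \<rightarrow>\<^sup>*\<^bsub>mk_symmetric (G12 G e1 e2)\<^esub> Inl (tail G e2)"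
    and "Inr True \<rightarrow>\<^sup>*\<^bsub>mk_symmetric (G12 G e1 e2)\<^esub> Inl (head G e2)"
  using wf_digraph.arc_reachable_mk_symmetric[OF assms(1), of "Inr 0"]
    wf_digraph.arc_reachable_mk_symmetric[OF assms(1), of "Inr 1"]
    wf_digraph.arc_reachable_mk_symmetric[OF assms(1), of "Inr 2"]
    wf_digraph.arc_reachable_mk_symmetric[OF assms(1), of "Inr 3"]
  by (simp_all add: arcs_G12)

lemma connected_G12:
  assumes "wf_digraph G" and "connected G" and "e1 \<in> arcs G" and "e2 \<in> arcs G"
  shows "connected (G12 G e1 e2)"
proof -
  let ?H = "G12 G e1 e2"
  have wf: "wf_digraph ?H"
    using assms(1,3,4) by (rule wf_digraph_G12)
  note w = reachable_subdivision_vertices_G12[OF wf assms(3,4)]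
  interpret S: pair_wf_digraph "mk_symmetric ?H"
    using wf by (rule wf_digraph.wellformed_mk_symmetric)
  show ?thesis
  proof (rule connected_if_reachable_from_image[OF wf assms(2)])
    show "Inl ` verts G \<subseteq> verts ?H"
      by auto
  next
    fix e assume e: "e \<in> arcs G"
    show "Inl (tail G e) \<rightarrow>\<^sup>*\<^bsub>mk_symmetric ?H\<^esub> Inl (head G e)"
    proof (cases "e = e1 \<or> e = e2")
      case True
      then show ?thesis
        using S.reachable_trans[OF w(1,3)] S.reachable_trans[OF w(4,6)] by blast
    next
      case False
      then have "Inl e \<in> arcs ?H"
        using e by (simp add: arcs_G12)
      then show ?thesis
        using wf_digraph.arc_reachable_mk_symmetric(1)[OF wf] by force
    qed
  next
    fix x assume "x \<in> verts ?H"
    then consider u where "x = Inl u" "u \<in> verts G" | "x = Inr False" | "x = Inr True"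
      by auto
    then show "\<exists>u \<in> verts G. x \<rightarrow>\<^sup>*\<^bsub>mk_symmetric ?H\<^esub> Inl u"
    proof cases
      case 1
      then have "Inl u \<rightarrow>\<^sup>*\<^bsub>mk_symmetric ?H\<^esub> Inl u"
        by (intro S.reachable_refl) simp
      with 1 show ?thesis by blast
    next
      case 2
      then show ?thesis
        using w(2) assms(1,3) by (auto simp: wf_digraph_def)
    next
      case 3
      then show ?thesis
        using w(5) assms(1,4) by (auto simp: wf_digraph_def)
    qed
  qed
qed

section \<open>Transferring colourings\<close>

lemma proper_colouring_restrict_G12:
  assumes "finite (arcs G)" and "proper_3_edge_colouring (G12 G e1 e2) d"
  shows "proper_3_edge_colouring (delete_edges G {e1,e2}) (d \<circ> Inl)"
proof -
  have fin: "finite (arcs (G12 G e1 e2))" "finite (arcs (delete_edges G {e1,e2}))"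
    using assms(1) by (simp_all add: arcs_G12)
  show ?thesis
    unfolding proper_3_edge_colouring_iff[OF fin(2)]
  proof (intro conjI ballI allI)
    fix e assume "e \<in> arcs (delete_edges G {e1,e2})"
    then show "(d \<circ> Inl) e \<in> {0,1,2}"
      using assms(2) by (simp add: proper_3_edge_colouring_iff[OF fin(1)] arcs_G12)
  next
    fix v k assume "v \<in> verts (delete_edges G {e1,e2})"
    then have "colour_degree (G12 G e1 e2) d (Inl v) k \<le> 1"
      using assms(2) by (simp add: proper_3_edge_colouring_iff[OF fin(1)])
    then show "colour_degree (delete_edges G {e1,e2}) (d \<circ> Inl) v k \<le> 1"
      by (simp add: colour_degree_G12_old_vertex[OF assms(1)])
  qed
qed

lemma proper_colouring_from_ports:
  fixes G :: "('v,'e) pre_digraph" and e1 e2 :: 'e and col :: "nat \<Rightarrow> nat"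
  defines "H \<equiv> delete_edges G {e1,e2}"
  assumes "finite (arcs G)" and "e1 \<in> arcs G" and "e2 \<in> arcs G" and "e1 \<noteq> e2"
    and "proper_3_edge_colouring H c" and "col 0 = col 1" and "col 2 = col 3"
    and "\<And>s. s < 4 \<Longrightarrow> col s \<in> {0,1,2}"
    and "\<And>v k. v \<in> verts G \<Longrightarrow> colour_degree H c v k + card {s. s < 4 \<and> port G e1 e2 s = v \<and> col s = k} \<le> 1"
  shows "proper_3_edge_colouring G (c(e1 := col 0, e2 := col 2))"
  unfolding proper_3_edge_colouring_iff[OF assms(2)]
proof (intro conjI ballI allI)
  fix e assume "e \<in> arcs G"
  then show "(c(e1 := col 0, e2 := col 2)) e \<in> {0,1,2}"
    using assms(6,9) by (auto simp: H_def proper_3_edge_colouring_iff assms(2))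
next
  fix v k assume "v \<in> verts G"
  let ?c = "c(e1 := col 0, e2 := col 2)"
  have "colour_degree G ?c v k = colour_degree H ?c v k
      + ((if col 0 = k then ends_at G v e1 else 0) + (if col 2 = k then ends_at G v e2 else 0))"
    using assms(2-5) by (simp add: H_def colour_degree_delete_edges[of G "{e1,e2}"])
  also have "colour_degree H ?c v k = colour_degree H c v k"
    using assms(3-5) by (intro colour_degree_cong) (auto simp: H_def)
  also have "(if col 0 = k then ends_at G v e1 else 0) + (if col 2 = k then ends_at G v e2 else 0)
      = card {s. s < 4 \<and> port G e1 e2 s = v \<and> col s = k}"
    using assms(7,8) by (simp add: card_less_4 port_def ends_at_def)
  finally have "colour_degree G (c(e1 := col 0, e2 := col 2)) v k
      = colour_degree H c v k + card {s. s < 4 \<and> port G e1 e2 s = v \<and> col s = k}" .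
  then show "colour_degree G (c(e1 := col 0, e2 := col 2)) v k \<le> 1"
    using assms(10) \<open>v \<in> verts G\<close> by simp
qed

lemma proper_colouring_G12_from_ports:
  fixes G :: "('v,'e) pre_digraph" and e1 e2 :: 'e and c :: "'e \<Rightarrow> nat" and col :: "nat \<Rightarrow> nat"
  defines "H \<equiv> delete_edges G {e1,e2}"
    and "d \<equiv> case_sum c (\<lambda>s. if s < 4 then col s else 3 - col 0 - col 1)"
  assumes "finite (arcs G)" and "proper_3_edge_colouring H c"
    and "col 0 \<noteq> col 1" and "{col 0, col 1} = {col 2, col 3}"
    and "\<And>s. s < 4 \<Longrightarrow> col s \<in> {0,1,2}"
    and "\<And>v k. v \<in> verts G \<Longrightarrow> colour_degree H c v k + card {s. s < 4 \<and> port G e1 e2 s = v \<and> col s = k} \<le> 1"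
  shows "proper_3_edge_colouring (G12 G e1 e2) d"
proof -
  have fin: "finite (arcs (G12 G e1 e2))"
    using assms(3) by (simp add: arcs_G12)
  have c: "\<forall>e \<in> arcs H. c e \<in> {0,1,2}"
    using assms(3,4) by (simp add: H_def proper_3_edge_colouring_iff)
  have col: "col 0 \<in> {0,1,2}" "col 1 \<in> {0,1,2}" "col 2 \<noteq> col 3"
    using assms(5-7) by (auto simp: doubleton_eq_iff)
  have d: "d \<circ> Inl = c" "d (Inr 4) = 3 - col 0 - col 1" "\<And>s. s < 4 \<Longrightarrow> d (Inr s) = col s"
    by (auto simp: d_def)
  have "col 2 \<in> {col 0, col 1}" "col 3 \<in> {col 0, col 1}"
    using assms(6) by blast+
  then have third: "3 - col 0 - col 1 \<in> {0,1,2} - {col 0, col 1, col 2, col 3}"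
    using col(1,2) assms(5) by auto
  show ?thesis
    unfolding proper_3_edge_colouring_iff[OF fin]
  proof (intro conjI ballI allI)
    fix x assume "x \<in> arcs (G12 G e1 e2)"
    then consider e where "x = Inl e" "e \<in> arcs H" | s where "x = Inr s" "s < 4" | "x = Inr 4"
      by (auto simp: arcs_G12 H_def le_less)
    then show "d x \<in> {0,1,2}"
      by cases (use c d third assms(7) in \<open>auto simp: d_def\<close>)
  next
    fix x k assume "x \<in> verts (G12 G e1 e2)"
    then consider v where "x = Inl v" "v \<in> verts G" | "x = Inr False" | "x = Inr True"
      by auto
    then show "colour_degree (G12 G e1 e2) d x k \<le> 1"
    proof cases
      case 1
      have "{s. s < 4 \<and> port G e1 e2 s = v \<and> d (Inr s) = k}
          = {s. s < 4 \<and> port G e1 e2 s = v \<and> col s = k}"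
        using d(3) by auto
      then show ?thesis
        using assms(8)[OF 1(2)] by (simp add: 1 colour_degree_G12_old_vertex[OF assms(3)] d(1) H_def)
    next
      case 2
      then show ?thesis
        using third assms(5) by (simp add: colour_degree_G12_new_vertices[OF assms(3)] d)
    next
      case 3
      then show ?thesis
        using third col(3) by (simp add: colour_degree_G12_new_vertices[OF assms(3)] d)
    qed
  qed
qed

lemma card_ports_eq_card_missing_colours:
  fixes G :: "('v,'e) pre_digraph" and e1 e2 :: 'e
  defines "H \<equiv> delete_edges G {e1,e2}"
  assumes "cubic G" and "e1 \<in> arcs G" and "e2 \<in> arcs G" and "e1 \<noteq> e2"
    and "proper_3_edge_colouring H c" and "v \<in> verts G"
  shows "card {s \<in> {..<4}. port G e1 e2 s = v} = card (missing_colours H c v)"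
proof -
  have fin: "finite (arcs G)"
    using assms(2) by (simp add: cubic_def fin_digraph_def fin_digraph_axioms_def)
  have "degree H v + card {s. s < 4 \<and> port G e1 e2 s = v} = degree G v"
    using fin assms(3-5)
    by (simp add: H_def degree_eq_colour_degree_const[of _ _ 0] colour_degree_delete_edges[of G "{e1,e2}"]
        card_less_4 port_def ends_at_def)
  also have "\<dots> = card (missing_colours H c v) + degree H v"
    using card_missing_colours[of H c v] assms(2,6,7) fin by (simp add: H_def cubic_def)
  finally show ?thesis by simp
qed

lemma obtain_port_colouring:
  fixes G :: "('v,'e) pre_digraph" and e1 e2 :: 'e
  defines "H \<equiv> delete_edges G {e1,e2}"
  assumes "cubic G" and "e1 \<in> arcs G" and "e2 \<in> arcs G" and "e1 \<noteq> e2"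
    and "proper_3_edge_colouring H c"
  obtains col :: "nat \<Rightarrow> nat" where "\<And>s. s < 4 \<Longrightarrow> col s \<in> {0,1,2}"
    and "\<And>v k. v \<in> verts G \<Longrightarrow> colour_degree H c v k + card {s. s < 4 \<and> port G e1 e2 s = v \<and> col s = k} \<le> 1"
    and "even (card {s. s < 4 \<and> col s = 0} + card {s. s < 4 \<and> col s = 1})"
    and "even (card {s. s < 4 \<and> col s = 1} + card {s. s < 4 \<and> col s = 2})"
proof -
  let ?M = "missing_colours H c" and ?port = "port G e1 e2"
  have fG: "fin_digraph G"
    using assms(2) by (simp add: cubic_def)
  then have fH: "fin_digraph H" and fin: "finite (arcs G)" "finite (verts G)"
    unfolding H_def by (simp_all add: fin_digraph_delete_edges fin_digraph_def[of G] fin_digraph_axioms_def)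
  have port_verts: "?port ` {..<4} \<subseteq> verts G"
    using fG assms(3,4) by (auto simp: port_def fin_digraph_def wf_digraph_def)
  obtain col where col_missing: "\<And>s. s \<in> {..<4} \<Longrightarrow> col s \<in> ?M (?port s)"
    and col_fibres: "\<And>v k. v \<in> verts G \<Longrightarrow> card {s \<in> {..<4}. ?port s = v \<and> col s = k} = of_bool (k \<in> ?M v)"
    using obtain_fibrewise_bijection[of "{..<4}" ?port "verts G" ?M] port_verts
      card_ports_eq_card_missing_colours[OF assms(2-6)[unfolded H_def]]
    by (auto simp: H_def missing_colours_def)
  have range: "col s \<in> {0,1,2}" if "s < 4" for s
    using col_missing[of s] that by (simp add: missing_colours_def)
  have fits: "colour_degree H c v k + card {s. s < 4 \<and> ?port s = v \<and> col s = k} \<le> 1"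
    if "v \<in> verts G" for v k
    using col_fibres[OF that, of k] missing_colour_add_colour_degree(1)[of H c v k] assms(6) fin(1) that
    by (simp add: H_def)
  have count: "card {s. s < 4 \<and> col s = k} + 2 * card {e \<in> arcs H. c e = k} = card (verts G)"
    if "k \<in> {0,1,2}" for k
    using card_fibrewise_count[of "{..<4}" "verts G" ?port col k ?M] fin(2) port_verts col_fibres
      parity_lemma[OF fH assms(6) that]
    by (simp add: H_def)
  have "even (card {s. s < 4 \<and> col s = 0} + card {s. s < 4 \<and> col s = 1})"
    and "even (card {s. s < 4 \<and> col s = 1} + card {s. s < 4 \<and> col s = 2})"
    using count[of 0] count[of 1] count[of 2] by simp_all presburger+
  with range fits show ?thesis
    by (rule that)
qed

lemma three_edge_colourable_G12:
  assumes "cubic G" and "\<not> three_edge_colourable G"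
    and "e1 \<in> arcs G" and "e2 \<in> arcs G" and "e1 \<noteq> e2"
    and "proper_3_edge_colouring (delete_edges G {e1,e2}) c"
  shows "three_edge_colourable (G12 G e1 e2)"
proof -
  have fin: "finite (arcs G)"
    using assms(1) by (simp add: cubic_def fin_digraph_def fin_digraph_axioms_def)
  obtain col where col_range: "\<And>s. s < 4 \<Longrightarrow> col s \<in> {0,1,2}"
    and fits: "\<And>v k. v \<in> verts G \<Longrightarrow> colour_degree (delete_edges G {e1,e2}) c v k
      + card {s. s < 4 \<and> port G e1 e2 s = v \<and> col s = k} \<le> 1"
    and even: "even (card {s. s < 4 \<and> col s = 0} + card {s. s < 4 \<and> col s = 1})"
      "even (card {s. s < 4 \<and> col s = 1} + card {s. s < 4 \<and> col s = 2})"
    using obtain_port_colouring[OF assms(1,3-6)] by blast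
  from four_colours_pair_up[of col, OF col_range even]
  consider "col 0 = col 1" "col 2 = col 3" | "col 0 \<noteq> col 1" "{col 0, col 1} = {col 2, col 3}"
    by blast
  then show ?thesis
  proof cases
    case 1
    have "proper_3_edge_colouring G (c(e1 := col 0, e2 := col 2))"
      using fin assms(3-6) 1 col_range fits by (rule proper_colouring_from_ports)
    with assms(2) show ?thesis
      by (auto simp: three_edge_colourable_def)
  next
    case 2
    have "proper_3_edge_colouring (G12 G e1 e2) (case_sum c (\<lambda>s. if s < 4 then col s else 3 - col 0 - col 1))"
      using fin assms(6) 2 col_range fits by (rule proper_colouring_G12_from_ports)
    then show ?thesis
      unfolding three_edge_colourable_def by blast
  qed
qed

theorem proposition4:
  fixes G :: "('v,'e) pre_digraph" and e1 e2 :: 'e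
  assumes "snark G" and "e1 \<in> arcs G" and "e2 \<in> arcs G" and "e1 \<noteq> e2"
  shows "snark (G12 G e1 e2) \<longleftrightarrow> \<not> three_edge_colourable (delete_edges G {e1, e2})"
proof -
  have cub: "cubic G" and con: "connected G" and ncol: "\<not> three_edge_colourable G"
    using assms(1) by (simp_all add: snark_def)
  have fin: "finite (arcs G)" and wf: "wf_digraph G"
    using cub by (simp_all add: cubic_def fin_digraph_def fin_digraph_axioms_def)
  have "three_edge_colourable (G12 G e1 e2) \<longleftrightarrow> three_edge_colourable (delete_edges G {e1, e2})"
    using three_edge_colourable_G12[OF cub ncol assms(2-4)] proper_colouring_restrict_G12[OF fin]
    unfolding three_edge_colourable_def by blast
  then show ?thesis
    using cubic_G12[OF cub assms(2-4)] connected_G12[OF wf con assms(2,3)] by (simp add: snark_def)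
qed

end
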